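(* Let $G$ be an affine partial cube with set of antipodes $A(G)$, and let $E_e$ be a $\Theta$-class of $G$. Then $A(\pi_e(G))=\pi_e(A(G))$.
   Context: Hypercube $Q_n$: vertex set $\{+,-\}^n$, adjacency = differing in one coordinate. A partial cube is an isometric subgraph of $Q_n$ with $n$ minimal; its edges split into $\Theta$-classes $E_f$ (edges flipping coordinate $f$), with halfspaces $E_f^{\pm}$ (vertices whose coordinate $f$ is $\pm$). A partial cube is antipodal if with each vertex it contains the vertex with all coordinates flipped. An affine partial cube is a halfspace of an antipodal partial cube. The contraction $\pi_e(G)$ is the graph obtained by contracting all edges of $E_e$ (a vertex is mapped to its sign vector with coordinate $e$ deleted); contractions of affine partial cubes are affine. For a partial cube $G$ and vertices $u,w$, the interval $[u,w]$ is the set of vertices on shortest $u$–$w$ paths. The antipodes $A(G)$ of an affine partial cube $G$ are the vertices $u\in G$ for which there is a vertex $-u\in G$ with $[u,-u]=V(G)$ (equivalently, if $G$ is the halfspace $E_f^+$ of an antipodal $G'$, the vertices of $E_f^+$ incident to an edge of $E_f$). *)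

theory Defs
  imports Main
begin

text \<open>Sign vectors over a finite ground set E are encoded as subsets of E
  (the coordinates equal to +). A subgraph of the hypercube is given by its
  vertex set V; for isometric subgraphs the graph is the induced one.\<close>

definition hc_adj :: "'e set set \<Rightarrow> 'e set \<Rightarrow> 'e set \<Rightarrow> bool" where
  "hc_adj V u v \<longleftrightarrow> u \<in> V \<and> v \<in> V \<and> card (u - v \<union> (v - u)) = 1"

text \<open>A path (as list of vertices) from u to w in the induced graph on V;
  its length is the number of edges, length p - 1.\<close>
definition is_path :: "'e set set \<Rightarrow> 'e set list \<Rightarrow> 'e set \<Rightarrow> 'e set \<Rightarrow> bool" where
  "is_path V p u w \<longleftrightarrow> p \<noteq> [] \<and> hd p = u \<and> last p = w \<and> set p \<subseteq> V \<and>
     (\<forall>i. Suc i < length p \<longrightarrow> hc_adj V (p ! i) (p ! Suc i))"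

definition gdist :: "'e set set \<Rightarrow> 'e set \<Rightarrow> 'e set \<Rightarrow> nat" where
  "gdist V u w = (LEAST n. \<exists>p. is_path V p u w \<and> length p = Suc n)"

definition hamming :: "'e set \<Rightarrow> 'e set \<Rightarrow> nat" where
  "hamming u v = card (u - v \<union> (v - u))"

text \<open>Partial cube on ground set E: V is an isometric subgraph of the hypercube
  on E (graph distance = Hamming distance, in particular connected), and E is
  minimal, i.e. every coordinate is flipped by some edge (every Theta-class is
  nonempty).\<close>
definition partial_cube :: "'e set \<Rightarrow> 'e set set \<Rightarrow> bool" where
  "partial_cube E V \<longleftrightarrow> finite E \<and> V \<noteq> {} \<and> (\<forall>u\<in>V. u \<subseteq> E) \<and>
     (\<forall>u\<in>V. \<forall>w\<in>V. (\<exists>p. is_path V p u w) \<and> gdist V u w = hamming u w) \<and>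
     (\<forall>f\<in>E. \<exists>u\<in>V. \<exists>v\<in>V. hc_adj V u v \<and> u - v \<union> (v - u) = {f})"

definition antipodal_pc :: "'e set \<Rightarrow> 'e set set \<Rightarrow> bool" where
  "antipodal_pc E V \<longleftrightarrow> partial_cube E V \<and> (\<forall>u\<in>V. E - u \<in> V)"

text \<open>Affine partial cube: (up to relabeling) the halfspace E_f^+ of an antipodal
  partial cube G' on the ground set E plus a new coordinate f; here the new
  coordinate is None and the old ones are Some e. The halfspace is considered
  with the (then constant) coordinate f deleted.\<close>
definition affine_pc :: "'e set \<Rightarrow> 'e set set \<Rightarrow> bool" where
  "affine_pc E V \<longleftrightarrow> (\<exists>G'. antipodal_pc (insert None (Some ` E)) G' \<and>
      V = {Some -` u | u. u \<in> G' \<and> None \<in> u})"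

definition interval :: "'e set set \<Rightarrow> 'e set \<Rightarrow> 'e set \<Rightarrow> 'e set set" where
  "interval V u w = {x. \<exists>p. is_path V p u w \<and> length p = Suc (gdist V u w) \<and> x \<in> set p}"

definition antipodes :: "'e set \<Rightarrow> 'e set set \<Rightarrow> 'e set set" where
  "antipodes E V = {u \<in> V. E - u \<in> V \<and> interval V u (E - u) = V}"

text \<open>Contraction of the Theta-class E_e: delete coordinate e.\<close>
definition contract :: "'e \<Rightarrow> 'e set set \<Rightarrow> 'e set set" where
  "contract e V = (\<lambda>u. u - {e}) ` V"

end

theory Submission
  imports Defs
begin

(* Isometry in the hypercube can be phrased locally: from every vertex x one can step, inside the
   graph, to a neighbour by flipping a coordinate in which x differs from a given target y. This
   local property passes to halfspaces and to contractions, and under it every vertex lies on a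
   geodesic between any two complementary vertices u and E - u. Hence, both before and after
   contracting e, the antipodes are exactly the vertices whose complement is present.
   It remains to lift: if u - e and its complement lie in the contraction, with the complement
   coming from w, and w is not E - u, then in the ambient antipodal cube a step from u towards the
   antipode of w either flips e, giving a preimage of u - e whose complement is w, or leaves the
   halfspace, and the antipode of the vertex reached shows that E - u is present after all. *)

lemma is_path_singleton [simp]: "is_path V [a] u w \<longleftrightarrow> u = a \<and> w = a \<and> a \<in> V"
  by (auto simp: is_path_def)

lemma is_path_Cons:
  assumes "q \<noteq> []"
  shows "is_path V (a # q) u w \<longleftrightarrow> u = a \<and> hc_adj V a (hd q) \<and> is_path V q (hd q) w"
proof -
  have "(\<forall>i. Suc i < length (a # q) \<longrightarrow> hc_adj V ((a # q) ! i) ((a # q) ! Suc i)) \<longleftrightarrow>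
        hc_adj V a (q ! 0) \<and> (\<forall>i. Suc i < length q \<longrightarrow> hc_adj V (q ! i) (q ! Suc i))"
    using assms by (auto simp: nth_Cons split: nat.splits)
  then show ?thesis
    using assms by (auto simp: is_path_def hd_conv_nth last_ConsR hc_adj_def)
qed

lemma is_path_append:
  assumes "is_path V p u m" and "is_path V q m w"
  shows "is_path V (p @ tl q) u w"
  using assms
proof (induction p arbitrary: u)
  case Nil
  then show ?case by (simp add: is_path_def)
next
  case (Cons a p)
  show ?case
  proof (cases "p = []")
    case True
    with Cons.prems have "q = u # tl q"
      by (cases q) (auto simp: is_path_def)
    with Cons.prems True show ?thesis by (metis append_Cons append_Nil is_path_singleton)
  next
    case False
    with Cons show ?thesis by (simp add: is_path_Cons)
  qed
qed

lemma hamming_triangle: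
  assumes "finite (sym_diff u v)"
  shows "hamming u w \<le> hamming u v + hamming v w"
proof (cases "finite (sym_diff u w)")
  case True
  have "sym_diff v w \<subseteq> sym_diff u v \<union> sym_diff u w" by blast
  with True assms have "finite (sym_diff v w)" by (meson finite_UnI finite_subset)
  moreover have "sym_diff u w \<subseteq> sym_diff u v \<union> sym_diff v w" by blast
  ultimately have "hamming u w \<le> card (sym_diff u v \<union> sym_diff v w)"
    unfolding hamming_def using assms by (intro card_mono) auto
  also have "\<dots> \<le> hamming u v + hamming v w"
    unfolding hamming_def by (rule card_Un_le)
  finally show ?thesis .
qed (simp add: hamming_def)

lemma hamming_less_length_path: "is_path V p u w \<Longrightarrow> hamming u w < length p"
proof (induction p arbitrary: u)
  case Nil
  then show ?case by (simp add: is_path_def)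
next
  case (Cons a q)
  show ?case
  proof (cases "q = []")
    case True
    with Cons.prems show ?thesis by (simp add: hamming_def)
  next
    case False
    with Cons.prems have "u = a" and adj: "hc_adj V a (hd q)" and "is_path V q (hd q) w"
      by (simp_all add: is_path_Cons)
    with Cons.IH have "hamming (hd q) w < length q" by blast
    moreover from adj have "hamming a (hd q) = 1"
      by (simp add: hc_adj_def hamming_def)
    moreover from adj have "finite (sym_diff a (hd q))"
      by (metis hc_adj_def card.infinite zero_neq_one)
    ultimately show ?thesis
      using hamming_triangle[of a "hd q" w] \<open>u = a\<close> by simp
  qed
qed

lemma gdist_eq_hamming:
  assumes "is_path V p u w" and "length p = Suc (hamming u w)"
  shows "gdist V u w = hamming u w"
  unfolding gdist_def
proof (rule Least_equality)
  show "\<exists>p. is_path V p u w \<and> length p = Suc (hamming u w)"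
    using assms by blast
next
  fix n assume "\<exists>p. is_path V p u w \<and> length p = Suc n"
  then show "hamming u w \<le> n"
    using hamming_less_length_path by fastforce
qed

lemma sym_diff_sym_diff_cancel: "sym_diff x (sym_diff x d) = d"
  by blast

lemma sym_diff_eq_singleton_iff: "sym_diff x z = {c} \<longleftrightarrow> z = sym_diff x {c}"
  by (auto simp: set_eq_iff)

lemma sym_diff_flip_in: "c \<in> sym_diff x y \<Longrightarrow> sym_diff (sym_diff x {c}) y = sym_diff x y - {c}"
  by auto

lemma sym_diff_flip_notin: "c \<notin> sym_diff x y \<Longrightarrow> sym_diff (sym_diff x {c}) y = insert c (sym_diff x y)"
  by auto

definition stepwise_isometric :: "'a set set \<Rightarrow> bool" where
  "stepwise_isometric W \<longleftrightarrow>
     (\<forall>x\<in>W. \<forall>y\<in>W. x \<noteq> y \<longrightarrow> (\<exists>c\<in>sym_diff x y. sym_diff x {c} \<in> W))"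

lemma stepwise_isometricD:
  assumes "stepwise_isometric W" and "x \<in> W" and "y \<in> W" and "x \<noteq> y"
  obtains c where "c \<in> sym_diff x y" and "sym_diff x {c} \<in> W"
  using assms unfolding stepwise_isometric_def by blast

lemma partial_cube_stepwise_isometric:
  assumes "partial_cube E V"
  shows "stepwise_isometric V"
  unfolding stepwise_isometric_def
proof (intro ballI impI)
  fix x y assume x: "x \<in> V" and y: "y \<in> V" and "x \<noteq> y"
  from assms x y have "sym_diff x y \<subseteq> E" and "finite E"
    unfolding partial_cube_def by auto
  then have fin: "finite (sym_diff x y)" by (rule finite_subset)
  from assms x y obtain p0 where "is_path V p0 x y" and gd: "gdist V x y = hamming x y"
    unfolding partial_cube_def by blast
  then have "\<exists>n p. is_path V p x y \<and> length p = Suc n"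
    by (intro exI[of _ "length p0 - 1"] exI[of _ p0]) (auto simp: is_path_def)
  from LeastI_ex[OF this] gd obtain p where p: "is_path V p x y" "length p = Suc (hamming x y)"
    unfolding gdist_def by auto
  from fin \<open>x \<noteq> y\<close> have "hamming x y \<noteq> 0"
    unfolding hamming_def by auto
  from p obtain q where q: "p = x # q"
    by (cases p) (auto simp: is_path_def)
  with p \<open>hamming x y \<noteq> 0\<close> have "q \<noteq> []" by auto
  with p q have adj: "hc_adj V x (hd q)" and path: "is_path V q (hd q) y"
    by (simp_all add: is_path_Cons)
  then obtain c where c: "hd q = sym_diff x {c}"
    unfolding hc_adj_def by (metis card_1_singletonE sym_diff_eq_singleton_iff)
  have "c \<in> sym_diff x y"
  proof (rule ccontr)
    assume "c \<notin> sym_diff x y"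
    with fin have "hamming (hd q) y = Suc (hamming x y)"
      unfolding hamming_def c sym_diff_flip_notin[OF \<open>c \<notin> sym_diff x y\<close>] by simp
    with hamming_less_length_path[OF path] p(2) q show False by simp
  qed
  moreover from adj c have "sym_diff x {c} \<in> V"
    unfolding hc_adj_def by simp
  ultimately show "\<exists>c\<in>sym_diff x y. sym_diff x {c} \<in> V" ..
qed

lemma stepwise_isometric_geodesic:
  assumes "finite E" and "\<forall>u\<in>W. u \<subseteq> E" and "stepwise_isometric W"
    and "x \<in> W" and "y \<in> W"
  shows "\<exists>p. is_path W p x y \<and> length p = Suc (hamming x y)"
  using assms(4,5)
proof (induction "hamming x y" arbitrary: x rule: less_induct)
  case less
  show ?case
  proof (cases "x = y")
    case True
    with less.prems show ?thesis
      by (intro exI[of _ "[x]"]) (simp add: hamming_def)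
  next
    case False
    with assms(3) less.prems obtain c
      where c: "c \<in> sym_diff x y" and z: "sym_diff x {c} \<in> W"
      by (rule stepwise_isometricD)
    have "sym_diff x y \<subseteq> E" using assms(2) less.prems by blast
    then have "finite (sym_diff x y)" using assms(1) by (rule finite_subset)
    with c have hz: "hamming x y = Suc (hamming (sym_diff x {c}) y)"
      unfolding hamming_def sym_diff_flip_in[OF c] by (intro card_Suc_Diff1[symmetric])
    with less.hyps[of "sym_diff x {c}"] z less.prems(2) obtain q
      where q: "is_path W q (sym_diff x {c}) y" "length q = Suc (hamming (sym_diff x {c}) y)"
      by auto
    then have "q \<noteq> []" and "hd q = sym_diff x {c}" by (auto simp: is_path_def)
    moreover have "hc_adj W x (sym_diff x {c})"
      using z less.prems(1) unfolding hc_adj_def sym_diff_sym_diff_cancel by simp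
    ultimately have "is_path W (x # q) x y"
      using q by (simp add: is_path_Cons)
    with q hz show ?thesis by (intro exI[of _ "x # q"]) simp
  qed
qed

lemma antipodes_eq_complements:
  assumes "finite E" and "\<forall>u\<in>W. u \<subseteq> E" and "stepwise_isometric W"
  shows "antipodes E W = {u \<in> W. E - u \<in> W}"
proof -
  have "W \<subseteq> interval W u (E - u)" if u: "u \<in> W" "E - u \<in> W" for u
  proof
    fix x assume x: "x \<in> W"
    from stepwise_isometric_geodesic[OF assms u(1) x] obtain p
      where p: "is_path W p u x" "length p = Suc (hamming u x)" by blast
    from stepwise_isometric_geodesic[OF assms x u(2)] obtain q
      where q: "is_path W q x (E - u)" "length q = Suc (hamming x (E - u))" by blast
    have "hamming u x + hamming x (E - u) = hamming u (E - u)"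
    proof -
      have "u \<subseteq> E" "x \<subseteq> E" using assms(2) u x by auto
      then have "sym_diff u (E - u) = sym_diff u x \<union> sym_diff x (E - u)"
        and "sym_diff u x \<inter> sym_diff x (E - u) = {}"
        and "sym_diff u x \<subseteq> E" and "sym_diff x (E - u) \<subseteq> E" by auto
      with assms(1) show ?thesis
        unfolding hamming_def by (metis card_Un_disjoint finite_subset)
    qed
    with p q have path: "is_path W (p @ tl q) u (E - u)"
      and len: "length (p @ tl q) = Suc (hamming u (E - u))"
      by (auto simp: is_path_append)
    moreover have "x \<in> set p" using p(1) unfolding is_path_def by (metis last_in_set)
    ultimately show "x \<in> interval W u (E - u)"
      unfolding interval_def gdist_eq_hamming[OF path len] by auto
  qed
  moreover have "interval W u w \<subseteq> W" for u w
    unfolding interval_def is_path_def by auto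
  ultimately show ?thesis
    unfolding antipodes_def by blast
qed

lemma stepwise_isometric_halfspace:
  assumes "stepwise_isometric W"
  shows "stepwise_isometric {u \<in> W. f \<in> u}"
  unfolding stepwise_isometric_def
proof (intro ballI impI)
  fix x y assume x: "x \<in> {u \<in> W. f \<in> u}" and y: "y \<in> {u \<in> W. f \<in> u}" and "x \<noteq> y"
  with assms obtain c where c: "c \<in> sym_diff x y" and "sym_diff x {c} \<in> W"
    by (auto elim: stepwise_isometricD)
  moreover from c x y have "f \<in> sym_diff x {c}" by auto
  ultimately show "\<exists>c\<in>sym_diff x y. sym_diff x {c} \<in> {u \<in> W. f \<in> u}" by blast
qed

lemma stepwise_isometric_vimage_Some:
  assumes "stepwise_isometric W" and "\<forall>u\<in>W. None \<in> u"
  shows "stepwise_isometric (vimage Some ` W)"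
  unfolding stepwise_isometric_def
proof (intro ballI impI)
  fix x' y' assume "x' \<in> vimage Some ` W" and "y' \<in> vimage Some ` W" and "x' \<noteq> y'"
  then obtain x y where x: "x \<in> W" "x' = Some -` x" and y: "y \<in> W" "y' = Some -` y" and "x \<noteq> y"
    by auto
  from assms(1) x(1) y(1) \<open>x \<noteq> y\<close> obtain c
    where c: "c \<in> sym_diff x y" and "sym_diff x {c} \<in> W"
    by (rule stepwise_isometricD)
  from c x y assms(2) obtain d where d: "c = Some d" by (cases c) auto
  with c x y have "d \<in> sym_diff x' y'" by auto
  moreover from d x have "sym_diff x' {d} = Some -` sym_diff x {c}" by auto
  with \<open>sym_diff x {c} \<in> W\<close> have "sym_diff x' {d} \<in> vimage Some ` W" by blast
  ultimately show "\<exists>d\<in>sym_diff x' y'. sym_diff x' {d} \<in> vimage Some ` W" by blast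
qed

lemma stepwise_isometric_contract:
  assumes "finite E" and "\<forall>u\<in>V. u \<subseteq> E" and "stepwise_isometric V"
  shows "stepwise_isometric (contract e V)"
proof -
  have "\<exists>c\<in>sym_diff (x - {e}) (y - {e}). sym_diff (x - {e}) {c} \<in> contract e V"
    if "x \<in> V" "y \<in> V" "x - {e} \<noteq> y - {e}" for x y
    using that
  proof (induction "hamming x y" arbitrary: x rule: less_induct)
    case less
    then have "x \<noteq> y" by blast
    with assms(3) less.prems(1,2) obtain c
      where c: "c \<in> sym_diff x y" and z: "sym_diff x {c} \<in> V"
      by (rule stepwise_isometricD)
    show ?case
    proof (cases "c = e")
      case False
      with c have "c \<in> sym_diff (x - {e}) (y - {e})" by auto
      moreover from False have "sym_diff (x - {e}) {c} = sym_diff x {c} - {e}" by auto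
      with z have "sym_diff (x - {e}) {c} \<in> contract e V" unfolding contract_def by blast
      ultimately show ?thesis ..
    next
      case True
      have "sym_diff x y \<subseteq> E" using assms(2) less.prems by blast
      then have "finite (sym_diff x y)" using assms(1) by (rule finite_subset)
      then have "hamming (sym_diff x {c}) y < hamming x y"
        unfolding hamming_def sym_diff_flip_in[OF c] using c by (rule card_Diff1_less)
      moreover from True have "sym_diff x {c} - {e} = x - {e}" by auto
      ultimately show ?thesis
        using less.hyps z less.prems by metis
    qed
  qed
  then show ?thesis
    unfolding stepwise_isometric_def contract_def by blast
qed

lemma affine_pc_ground:
  assumes "affine_pc E V"
  shows "finite E" and "\<forall>u\<in>V. u \<subseteq> E"
proof -
  from assms obtain G' where pc: "partial_cube (insert None (Some ` E)) G'"
    and V: "V = {Some -` u | u. u \<in> G' \<and> None \<in> u}"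
    unfolding affine_pc_def antipodal_pc_def by blast
  from pc show "finite E"
    unfolding partial_cube_def by (simp add: finite_image_iff)
  from pc V show "\<forall>u\<in>V. u \<subseteq> E"
    unfolding partial_cube_def by blast
qed

lemma affine_pc_stepwise_isometric:
  assumes "affine_pc E V"
  shows "stepwise_isometric V"
proof -
  from assms obtain G' where pc: "partial_cube (insert None (Some ` E)) G'"
    and V: "V = {Some -` u | u. u \<in> G' \<and> None \<in> u}"
    unfolding affine_pc_def antipodal_pc_def by blast
  from V have "V = vimage Some ` {u \<in> G'. None \<in> u}" by blast
  with pc show ?thesis
    by (simp add: partial_cube_stepwise_isometric stepwise_isometric_halfspace
        stepwise_isometric_vimage_Some)
qed

lemma mem_vimage_Some_halfspace_iff:
  "x \<in> {Some -` u | u. u \<in> G \<and> None \<in> u} \<longleftrightarrow> insert None (Some ` x) \<in> G"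
proof
  assume "x \<in> {Some -` u | u. u \<in> G \<and> None \<in> u}"
  then obtain u where u: "x = Some -` u" "u \<in> G" "None \<in> u" by blast
  have "insert None (Some ` x) = u"
  proof (rule set_eqI)
    fix y show "y \<in> insert None (Some ` x) \<longleftrightarrow> y \<in> u"
      using u(1,3) by (cases y) auto
  qed
  with u(2) show "insert None (Some ` x) \<in> G" by simp
next
  assume "insert None (Some ` x) \<in> G"
  moreover have "Some -` insert None (Some ` x) = x" by auto
  ultimately show "x \<in> {Some -` u | u. u \<in> G \<and> None \<in> u}" by blast
qed

lemma contract_complement_cases:
  assumes "e \<in> E" and "u \<subseteq> E" and "w \<subseteq> E" and "w - {e} = (E - {e}) - (u - {e})"
  shows "w = E - u \<or> E - w = sym_diff u {e}"
proof (cases "e \<in> w \<longleftrightarrow> e \<in> u")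
  case True
  have "E - w = sym_diff u {e}"
  proof (rule set_eqI)
    fix a show "a \<in> E - w \<longleftrightarrow> a \<in> sym_diff u {e}"
      using assms(1,2) True eqset_imp_iff[OF assms(4), of a] by (cases "a = e") auto
  qed
  then show ?thesis ..
next
  case False
  have "w = E - u"
  proof (rule set_eqI)
    fix a show "a \<in> w \<longleftrightarrow> a \<in> E - u"
      using assms(1,3) False eqset_imp_iff[OF assms(4), of a] by (cases "a = e") auto
  qed
  then show ?thesis ..
qed

lemma affine_pc_complement_lift:
  fixes E :: "'e set"
  assumes "affine_pc E V" and "e \<in> E" and "u \<in> V" and "w \<in> V"
    and "w - {e} = (E - {e}) - (u - {e})"
  shows "\<exists>v\<in>V. E - v \<in> V \<and> v - {e} = u - {e}"
proof (cases "E - u \<in> V")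
  case True
  with assms(3) show ?thesis by blast
next
  case False
  define F where "F = insert None (Some ` E)"
  define lift :: "'e set \<Rightarrow> 'e option set" where "lift x = insert None (Some ` x)" for x
  from assms(1) obtain G' where "antipodal_pc F G'" and V: "V = {Some -` u | u. u \<in> G' \<and> None \<in> u}"
    unfolding affine_pc_def F_def by blast
  then have G': "stepwise_isometric G'" and antipode: "\<And>U. U \<in> G' \<Longrightarrow> F - U \<in> G'"
    unfolding antipodal_pc_def by (auto intro: partial_cube_stepwise_isometric)
  have mem: "x \<in> V \<longleftrightarrow> lift x \<in> G'" for x
    unfolding V lift_def by (rule mem_vimage_Some_halfspace_iff)
  have "u \<subseteq> E" and "w \<subseteq> E"
    using affine_pc_ground(2)[OF assms(1)] assms(3,4) by auto
  moreover from False assms(4) have "w \<noteq> E - u" by blast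
  ultimately have Ew: "E - w = sym_diff u {e}"
    using contract_complement_cases[OF assms(2) _ _ assms(5)] by blast
  have "lift u \<in> G'" and "lift w \<in> G'" using assms(3,4) mem by blast+
  moreover have "F - lift w = Some ` sym_diff u {e}"
    using \<open>w \<subseteq> E\<close> unfolding F_def lift_def Ew[symmetric] by auto
  with antipode[OF \<open>lift w \<in> G'\<close>] have "Some ` sym_diff u {e} \<in> G'" by simp
  moreover have "lift u \<noteq> Some ` sym_diff u {e}"
    unfolding lift_def by auto
  ultimately obtain c where "c \<in> sym_diff (lift u) (Some ` sym_diff u {e})"
    and Z: "sym_diff (lift u) {c} \<in> G'"
    using G' by (meson stepwise_isometricD)
  moreover have "sym_diff (lift u) (Some ` sym_diff u {e}) = {None, Some e}"
    unfolding lift_def by auto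
  ultimately consider "c = None" | "c = Some e" by blast
  then show ?thesis
  proof cases
    case 1
    have "sym_diff (lift u) {None} = Some ` u" and "F - Some ` u = lift (E - u)"
      using \<open>u \<subseteq> E\<close> unfolding F_def lift_def by auto
    with Z 1 antipode have "E - u \<in> V"
      unfolding mem by metis
    with False show ?thesis ..
  next
    case 2
    have "sym_diff (lift u) {Some e} = lift (sym_diff u {e})"
      unfolding lift_def by auto
    with Z 2 have "sym_diff u {e} \<in> V" unfolding mem by simp
    moreover have "E - sym_diff u {e} = w"
      unfolding Ew[symmetric] using double_diff[OF \<open>w \<subseteq> E\<close> subset_refl] .
    moreover have "sym_diff u {e} - {e} = u - {e}" by auto
    ultimately show ?thesis using assms(4) by metis
  qed
qed

lemma affine_pc_contract_complements:
  assumes "affine_pc E V" and "e \<in> E"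
  shows "{u \<in> contract e V. E - {e} - u \<in> contract e V} = contract e {u \<in> V. E - u \<in> V}"
proof (intro equalityI subsetI)
  fix u' assume "u' \<in> {u \<in> contract e V. E - {e} - u \<in> contract e V}"
  then obtain u w where "u \<in> V" "w \<in> V" and u': "u' = u - {e}" and "E - {e} - u' = w - {e}"
    unfolding contract_def by blast
  then have "w - {e} = E - {e} - (u - {e})" by simp
  with affine_pc_complement_lift[OF assms \<open>u \<in> V\<close> \<open>w \<in> V\<close>] obtain v
    where "v \<in> V" "E - v \<in> V" "u' = v - {e}"
    unfolding u' by metis
  then show "u' \<in> contract e {u \<in> V. E - u \<in> V}"
    unfolding contract_def by blast
next
  fix u' assume "u' \<in> contract e {u \<in> V. E - u \<in> V}"
  then obtain u where "u \<in> V" "E - u \<in> V" and u': "u' = u - {e}"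
    unfolding contract_def by blast
  moreover have "E - {e} - (u - {e}) = (E - u) - {e}" by blast
  ultimately show "u' \<in> {u \<in> contract e V. E - {e} - u \<in> contract e V}"
    unfolding contract_def by auto
qed

theorem mainTheorem18:
  fixes E :: "'e set" and V :: "'e set set" and e :: 'e
  assumes "affine_pc E V" and "e \<in> E"
  shows "antipodes (E - {e}) (contract e V) = contract e (antipodes E V)"
proof -
  have fin: "finite E" and sub: "\<forall>u\<in>V. u \<subseteq> E" and V: "stepwise_isometric V"
    using affine_pc_ground[OF assms(1)] affine_pc_stepwise_isometric[OF assms(1)] by blast+
  from sub have "\<forall>u\<in>contract e V. u \<subseteq> E - {e}"
    unfolding contract_def by auto
  with fin have "antipodes (E - {e}) (contract e V) = {u \<in> contract e V. E - {e} - u \<in> contract e V}"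
    using stepwise_isometric_contract[OF fin sub V] by (intro antipodes_eq_complements) auto
  also have "\<dots> = contract e {u \<in> V. E - u \<in> V}"
    using assms by (rule affine_pc_contract_complements)
  also have "\<dots> = contract e (antipodes E V)"
    by (simp add: antipodes_eq_complements[OF fin sub V])
  finally show ?thesis .
qed

end
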